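(* Let $R$ be a ring with unity and involution $*$, and let $a,b,c\in R$. Then $a$ is left dual $(b,c)$-core invertible if and only if $ab$ is strongly left $(b^*,c)$-invertible.
   Context: For $u,b,c\in R$, $u$ is left dual $(b,c)$-core invertible if there exists $x\in Rc$ with $bxub=b$ and $(xub)^*=xub$. $u$ is strongly left $(b,c)$-invertible if $b\in Rcub$ and $cub$ is regular (i.e. there exists $z$ with $cub\,z\,cub=cub$); equivalently there exists $x\in R$ with $xux=x$, $xR=bR$ and $Rx\subseteq Rc$. *)

theory Defs
  imports Main
begin

definition involution :: "('a::ring_1 \<Rightarrow> 'a) \<Rightarrow> bool" where
  "involution s \<longleftrightarrow>
     (\<forall>x y. s (x + y) = s x + s y) \<and>
     (\<forall>x y. s (x * y) = s y * s x) \<and>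
     (\<forall>x. s (s x) = x)"

definition left_dual_core_inv :: "('a::ring_1 \<Rightarrow> 'a) \<Rightarrow> 'a \<Rightarrow> 'a \<Rightarrow> 'a \<Rightarrow> bool" where
  "left_dual_core_inv s u b c \<longleftrightarrow>
     (\<exists>x. (\<exists>r. x = r * c) \<and> b * x * u * b = b \<and> s (x * u * b) = x * u * b)"

definition strongly_left_inv :: "'a::ring_1 \<Rightarrow> 'a \<Rightarrow> 'a \<Rightarrow> bool" where
  "strongly_left_inv u b c \<longleftrightarrow>
     (\<exists>r. b = r * (c * u * b)) \<and> (\<exists>z. (c * u * b) * z * (c * u * b) = c * u * b)"

end

theory Submission
  imports Defs
begin

text \<open>Both properties say that \<open>s b = x * a * b * s b\<close> for some \<open>x \<in> R c\<close>. For left dual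
  core invertibility, apply the involution to \<open>b * x * a * b = b\<close>; conversely,
  \<open>h = x * a * b\<close> fixing \<open>s b\<close> forces \<open>h\<close> to be self-adjoint. For strong left invertibility,
  regularity of \<open>c * a * b * s b\<close> comes for free from the same equation.\<close>

lemma involution_mult: "involution s \<Longrightarrow> s (x * y) = s y * s x"
  and involution_involutive: "involution s \<Longrightarrow> s (s x) = x"
  unfolding involution_def by auto

lemma selfadjoint_if_mult_adjoint:
  assumes s: "involution s" and h: "h * s h = s h"
  shows "s h = h"
proof -
  have "s (h * s h) = h * s h"
    by (simp add: involution_mult[OF s] involution_involutive[OF s])
  then show ?thesis
    using h by (simp add: involution_involutive[OF s])
qed

lemma selfadjoint_if_fixedoint:
  assumes s: "involution s" and fixed: "y * b * s b = s b"
  shows "s (y * b) = y * b"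
proof (rule selfadjoint_if_mult_adjoint[OF s])
  have "y * b * s (y * b) = (y * b * s b) * s y"
    by (simp add: involution_mult[OF s] mult.assoc)
  then show "y * b * s (y * b) = s (y * b)"
    using fixed by (simp add: involution_mult[OF s])
qed

lemma left_dual_core_inv_iff:
  assumes s: "involution s"
  shows "left_dual_core_inv s u b c \<longleftrightarrow> (\<exists>r. r * c * u * b * s b = s b)"
proof
  assume "left_dual_core_inv s u b c"
  then obtain r where b: "b * (r * c) * u * b = b" and h: "s (r * c * u * b) = r * c * u * b"
    unfolding left_dual_core_inv_def by blast
  have "s b = s (b * (r * c * u * b))"
    using b by (simp add: mult.assoc)
  also have "\<dots> = r * c * u * b * s b"
    using h by (simp add: involution_mult[OF s])
  finally show "\<exists>r. r * c * u * b * s b = s b" by metis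
next
  assume "\<exists>r. r * c * u * b * s b = s b"
  then obtain r where fixed: "r * c * u * b * s b = s b" ..
  have h: "s (r * c * u * b) = r * c * u * b"
    using selfadjoint_if_fixedoint[OF s fixed] .
  have "b = s (r * c * u * b * s b)"
    using fixed by (simp add: involution_involutive[OF s])
  also have "\<dots> = b * s (r * c * u * b)"
    by (simp add: involution_mult[OF s] involution_involutive[OF s])
  also have "\<dots> = b * (r * c) * u * b"
    using h by (simp add: mult.assoc)
  finally have "b * (r * c) * u * b = b" by simp
  with h show "left_dual_core_inv s u b c"
    unfolding left_dual_core_inv_def by (intro exI[of _ "r * c"]) auto
qed

lemma regular_if_adjoint_in_left_ideal:
  assumes s: "involution s" and fixed: "r * c * a * b * s b = s b"
  shows "(c * a * b * s b) * (s a * s (r * c) * r) * (c * a * b * s b) = c * a * b * s b"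
proof -
  have "b * s b * s a * s (r * c) = s (r * c * a * b * s b)"
    by (simp add: involution_mult[OF s] involution_involutive[OF s] mult.assoc)
  also have "\<dots> = b"
    using fixed by (simp add: involution_involutive[OF s])
  finally have b: "b * s b * s a * s (r * c) = b" .
  have "(c * a * b * s b) * (s a * s (r * c) * r) * (c * a * b * s b)
      = c * a * (b * s b * s a * s (r * c)) * (r * c * a * b * s b)"
    by (simp add: mult.assoc)
  also have "\<dots> = c * a * b * s b"
    using b fixed by simp
  finally show ?thesis .
qed

lemma strongly_left_inv_adjoint_iff:
  assumes s: "involution s"
  shows "strongly_left_inv (a * b) (s b) c \<longleftrightarrow> (\<exists>r. r * c * a * b * s b = s b)"
proof
  assume "strongly_left_inv (a * b) (s b) c"
  then obtain r where "s b = r * (c * (a * b) * s b)"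
    unfolding strongly_left_inv_def by blast
  then have "r * c * a * b * s b = s b"
    by (simp add: mult.assoc)
  then show "\<exists>r. r * c * a * b * s b = s b" ..
next
  assume "\<exists>r. r * c * a * b * s b = s b"
  then obtain r where fixed: "r * c * a * b * s b = s b" ..
  then have "s b = r * (c * (a * b) * s b)"
    by (simp add: mult.assoc)
  moreover have "(c * (a * b) * s b) * (s a * s (r * c) * r) * (c * (a * b) * s b) = c * (a * b) * s b"
    using regular_if_adjoint_in_left_ideal[OF s fixed] by (simp add: mult.assoc)
  ultimately show "strongly_left_inv (a * b) (s b) c"
    unfolding strongly_left_inv_def by blast
qed

theorem theorem3p12:
  fixes s :: "'a::ring_1 \<Rightarrow> 'a" and a b c :: 'a
  assumes "involution s"
  shows "left_dual_core_inv s a b c \<longleftrightarrow> strongly_left_inv (a * b) (s b) c"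
  using left_dual_core_inv_iff[OF assms] strongly_left_inv_adjoint_iff[OF assms] by simp

end
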